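(* Let $\mathbf{A}\in\mathbb{Z}^{m\times n}$ have at least one nonzero entry in every row and column, and let $\mathbf{A}^{Z}=\begin{pmatrix}\mathbf{A} & -\mathbf{A}\mathbf{1}\end{pmatrix}\in\mathbb{Z}^{m\times(n+1)}$, where $\mathbf{1}\in\mathbb{R}^n$ is the all-ones vector. Then there is an absolute constant $C$ such that $\kappa(\mathbf{A}^{Z})\le C\,n^{3/2}\,\kappa(\mathbf{A})$.
   Context: For a nonzero matrix $\mathbf{M}$, $\kappa(\mathbf{M})=\sigma_{\max}(\mathbf{M})/\sigma_{\min}(\mathbf{M})$, where $\sigma_{\max}$ is the largest singular value and $\sigma_{\min}$ the smallest nonzero singular value. *)

theory Defs
  imports "Jordan_Normal_Form.Char_Poly"
begin

definition pos_singular_values :: "real mat \<Rightarrow> real set" where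
  "pos_singular_values M = {s. s > 0 \<and> eigenvalue (transpose_mat M * M) (s^2)}"

definition cond_num :: "real mat \<Rightarrow> real" where
  "cond_num M = Max (pos_singular_values M) / Min (pos_singular_values M)"

definition AZ :: "int mat \<Rightarrow> int mat" where
  "AZ A = mat (dim_row A) (dim_col A + 1)
     (\<lambda>(i,j). if j < dim_col A then A $$ (i,j) else - (\<Sum>k<dim_col A. A $$ (i,k)))"

end

theory Submission
  imports Defs "HOL-Analysis.Function_Topology"
begin

text \<open>Write \<open>A\<^sup>Z = A B\<close> with \<open>B = (I | -\<one>)\<close>. Since \<open>\<parallel>B v\<parallel>\<^sup>2 \<le> 2(n+1) \<parallel>v\<parallel>\<^sup>2\<close>, the
  largest singular value grows by at most the factor \<open>sqrt (2(n+1))\<close>. Since \<open>B\<^sup>T u = (u, -\<Sum>u)\<close>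
  never shortens \<open>u\<close>, a nonzero singular value \<open>s\<close> of \<open>A B\<close> with eigenvector \<open>v\<close> of
  \<open>(A B)\<^sup>T A B\<close> satisfies, for \<open>w = B v\<close>,
  \<open>\<sigma>\<^sub>m\<^sub>i\<^sub>n(A)\<^sup>2 \<parallel>A w\<parallel>\<^sup>2 \<le> \<parallel>A\<^sup>T A w\<parallel>\<^sup>2 \<le> \<parallel>B\<^sup>T A\<^sup>T A w\<parallel>\<^sup>2 = s\<^sup>2 \<parallel>A w\<parallel>\<^sup>2\<close>, so the smallest
  nonzero singular value does not drop. Singular values are handled through an orthonormal
  eigenbasis of \<open>M\<^sup>T M\<close>, which is obtained from the variational proof of the spectral theorem.\<close>

section \<open>Euclidean structure of real vectors\<close>

lemma scalar_prod_self_nonneg: "0 \<le> (v :: real vec) \<bullet> v"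
  using conjugate_square_ge_0_vec[of v] by simp

lemma scalar_prod_self_pos_iff:
  "(v :: real vec) \<in> carrier_vec n \<Longrightarrow> 0 < v \<bullet> v \<longleftrightarrow> v \<noteq> 0\<^sub>v n"
  using conjugate_square_greater_0_vec[of v n] by simp

lemma scalar_prod_self_eq_sum: "v \<in> carrier_vec n \<Longrightarrow> v \<bullet> v = (\<Sum>i<n. v $ i * v $ i)"
  by (auto simp: scalar_prod_def lessThan_atLeast0)

lemma nth_square_le_scalar_prod_self:
  "(v :: real vec) \<in> carrier_vec n \<Longrightarrow> i < n \<Longrightarrow> v $ i * v $ i \<le> v \<bullet> v"
  by (simp add: scalar_prod_self_eq_sum, rule member_le_sum, auto)

lemma scalar_prod_mult_mat_vec_self:
  fixes M :: "'a :: comm_semiring_0 mat"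
  assumes M: "M \<in> carrier_mat r c" and x: "x \<in> carrier_vec c"
  shows "(M *\<^sub>v x) \<bullet> (M *\<^sub>v x) = x \<bullet> ((M\<^sup>T * M) *\<^sub>v x)"
proof -
  have "(M *\<^sub>v x) \<bullet> (M *\<^sub>v x) = (M\<^sup>T *\<^sub>v (M *\<^sub>v x)) \<bullet> x"
    using transpose_vec_mult_scalar[OF M x, of "M *\<^sub>v x"] M x by simp
  also have "\<dots> = x \<bullet> ((M\<^sup>T * M) *\<^sub>v x)"
    using M x comm_scalar_prod[of "(M\<^sup>T * M) *\<^sub>v x" c x] by auto
  finally show ?thesis .
qed

lemma symmetric_scalar_prod_mult_mat_vec:
  fixes P :: "'a :: comm_semiring_0 mat"
  assumes P: "P \<in> carrier_mat n n" "P\<^sup>T = P" and x: "x \<in> carrier_vec n" and y: "y \<in> carrier_vec n"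
  shows "x \<bullet> (P *\<^sub>v y) = (P *\<^sub>v x) \<bullet> y"
  using transpose_vec_mult_scalar[OF P(1) y x] P(2) by simp

lemma quadratic_form_add_smult:
  fixes P :: "real mat"
  assumes P: "P \<in> carrier_mat n n" "P\<^sup>T = P" and x: "x \<in> carrier_vec n" and r: "r \<in> carrier_vec n"
  shows "(x + t \<cdot>\<^sub>v r) \<bullet> (P *\<^sub>v (x + t \<cdot>\<^sub>v r))
    = x \<bullet> (P *\<^sub>v x) + 2 * t * (r \<bullet> (P *\<^sub>v x)) + t\<^sup>2 * (r \<bullet> (P *\<^sub>v r))"
proof -
  have sym: "x \<bullet> (P *\<^sub>v r) = r \<bullet> (P *\<^sub>v x)"
    using symmetric_scalar_prod_mult_mat_vec[OF P x r] comm_scalar_prod[of "P *\<^sub>v x" n r] P x r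
    by auto
  have "P *\<^sub>v (x + t \<cdot>\<^sub>v r) = P *\<^sub>v x + t \<cdot>\<^sub>v (P *\<^sub>v r)"
    using P x r by (simp add: mult_add_distrib_mat_vec mult_mat_vec)
  moreover have "(x + t \<cdot>\<^sub>v r) \<bullet> (P *\<^sub>v x + t \<cdot>\<^sub>v (P *\<^sub>v r))
      = x \<bullet> (P *\<^sub>v x) + t * (x \<bullet> (P *\<^sub>v r)) + (t * (r \<bullet> (P *\<^sub>v x)) + t * t * (r \<bullet> (P *\<^sub>v r)))"
    using P x r
    by (simp add: add_scalar_prod_distrib[of _ n] scalar_prod_add_distrib[of _ n] ring_distribs)
  ultimately show ?thesis unfolding sym by (simp add: power2_eq_square algebra_simps)
qed

lemma linear_le_quadratic_imp_zero:
  fixes a q :: real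
  assumes "\<And>t. t * a + t\<^sup>2 * q \<le> 0"
  shows "a = 0"
proof (rule ccontr)
  assume "a \<noteq> 0"
  define p where "p = 1 + \<bar>q\<bar>"
  have p: "0 < p" by (simp add: p_def add_pos_nonneg)
  have "(a / p) * a - (a / p)\<^sup>2 * \<bar>q\<bar> = a\<^sup>2 / p\<^sup>2"
    using p by (simp add: p_def power2_eq_square divide_simps) (simp add: algebra_simps)
  also have "\<dots> > 0" using \<open>a \<noteq> 0\<close> p by simp
  finally have "0 < (a / p) * a + (a / p)\<^sup>2 * q"
    using mult_left_mono[OF abs_ge_minus_self[of q], of "(a / p)\<^sup>2"] by simp
  with assms[of "a / p"] show False by simp
qed

section \<open>The spectral theorem for real symmetric matrices\<close>

definition orth_compl :: "nat \<Rightarrow> (nat \<Rightarrow> 'a :: comm_ring vec) \<Rightarrow> nat \<Rightarrow> 'a vec set" where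
  "orth_compl n us k = {y \<in> carrier_vec n. \<forall>i<k. us i \<bullet> y = 0}"

lemma scalar_prod_smult_right': "(u :: 'a :: comm_semiring_0 vec) \<bullet> (t \<cdot>\<^sub>v y) = t * (u \<bullet> y)"
  by (simp add: scalar_prod_def sum_distrib_left ac_simps)

lemma scalar_prod_add_distrib':
  "dim_vec x = dim_vec y \<Longrightarrow> u \<bullet> (x + y) = u \<bullet> x + u \<bullet> y"
  by (simp add: scalar_prod_def sum.distrib distrib_left)

lemma orth_compl_add_smult:
  assumes "x \<in> orth_compl n us k" "y \<in> orth_compl n us k"
  shows "x + t \<cdot>\<^sub>v y \<in> orth_compl n us k"
  using assms
  by (auto simp: orth_compl_def scalar_prod_add_distrib' scalar_prod_smult_right' carrier_vecD)

lemma orth_compl_smult: "y \<in> orth_compl n us k \<Longrightarrow> t \<cdot>\<^sub>v y \<in> orth_compl n us k"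
  by (simp add: orth_compl_def scalar_prod_smult_right')

lemma orth_compl_nonzero:
  fixes us :: "nat \<Rightarrow> 'a :: field vec"
  assumes k: "k < n" and us: "\<forall>i<k. us i \<in> carrier_vec n"
  shows "\<exists>x \<in> orth_compl n us k. x \<noteq> 0\<^sub>v n"
proof -
  define U where "U = mat n n (\<lambda>(i, j). if i < k then us i $ j else 0)"
  have U: "U \<in> carrier_mat n n" unfolding U_def by auto
  have "U = mat\<^sub>r n n (\<lambda>i. if i = k then 0\<^sub>v n else row U i)"
    unfolding U_def by (auto intro!: eq_matI simp: k)
  also have "det \<dots> = 0" by (rule det_row_0[OF k]) (auto simp: U_def)
  finally have "det U = 0" .
  then obtain v where v: "v \<in> carrier_vec n" "v \<noteq> 0\<^sub>v n" "U *\<^sub>v v = 0\<^sub>v n"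
    using det_0_iff_vec_prod_zero_field[OF U] by auto
  have "us i \<bullet> v = 0" if i: "i < k" for i
  proof -
    have "row U i = us i" using i k us by (auto simp: U_def intro!: eq_vecI)
    then show ?thesis using arg_cong[OF v(3), of "\<lambda>w. w $ i"] i k U by auto
  qed
  with v show ?thesis unfolding orth_compl_def by auto
qed

text \<open>Vectors of type \<open>vec\<close> carry no topology, so the Rayleigh quotient is maximized over
  their coordinate functions in the product space \<open>nat \<Rightarrow> real\<close>.\<close>

lemma compact_unit_orth_compl_coordinates:
  "compact {g :: nat \<Rightarrow> real. (\<forall>i. g i \<in> (if i < n then {-1..1} else {0}))
     \<and> (\<Sum>i<n. g i * g i) = 1 \<and> (\<forall>j<k. (\<Sum>i<n. us j $ i * g i) = 0)}"
proof -
  have "compactin (product_topology (\<lambda>_. euclideanreal) UNIV)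
      (PiE UNIV (\<lambda>i. if i < n then {-1..1::real} else {0}))"
    by (subst compactin_PiE) (auto simp: compactin_euclidean_iff)
  then have "compact (PiE UNIV (\<lambda>i. if i < n then {-1..1::real} else {0}))"
    unfolding euclidean_product_topology compactin_euclidean_iff .
  moreover have "closed {g :: nat \<Rightarrow> real. (\<Sum>i<n. g i * g i) = 1}"
    by (intro closed_Collect_eq continuous_intros continuous_on_product_coordinates)
  moreover have "closed (\<Inter>j<k. {g :: nat \<Rightarrow> real. (\<Sum>i<n. us j $ i * g i) = 0})"
    by (intro closed_INT ballI closed_Collect_eq continuous_intros continuous_on_product_coordinates)
  ultimately have "compact (PiE UNIV (\<lambda>i. if i < n then {-1..1::real} else {0})
      \<inter> {g. (\<Sum>i<n. g i * g i) = 1} \<inter> (\<Inter>j<k. {g. (\<Sum>i<n. us j $ i * g i) = 0}))"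
    by (intro compact_Int_closed)
  moreover have "PiE UNIV (\<lambda>i. if i < n then {-1..1::real} else {0})
      \<inter> {g. (\<Sum>i<n. g i * g i) = 1} \<inter> (\<Inter>j<k. {g. (\<Sum>i<n. us j $ i * g i) = 0})
    = {g. (\<forall>i. g i \<in> (if i < n then {-1..1} else {0}))
      \<and> (\<Sum>i<n. g i * g i) = 1 \<and> (\<forall>j<k. (\<Sum>i<n. us j $ i * g i) = 0)}"
    by (auto simp: PiE_def Pi_def extensional_def)
  ultimately show ?thesis by simp
qed

lemma quadratic_form_attains_max_on_unit_orth_compl:
  fixes P :: "real mat"
  assumes P: "P \<in> carrier_mat n n" and y0: "y0 \<in> orth_compl n us k" "y0 \<noteq> 0\<^sub>v n"
  shows "\<exists>x\<in>orth_compl n us k. x \<bullet> x = 1 \<and>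
    (\<forall>y\<in>orth_compl n us k. y \<bullet> y = 1 \<longrightarrow> y \<bullet> (P *\<^sub>v y) \<le> x \<bullet> (P *\<^sub>v x))"
proof -
  define coords where "coords x = (\<lambda>i. if i < n then x $ i else (0::real))" for x :: "real vec"
  define F where "F g = (\<Sum>i<n. g i * (\<Sum>l<n. P $$ (i, l) * g l))" for g :: "nat \<Rightarrow> real"
  define S where "S = {g. (\<forall>i. g i \<in> (if i < n then {-1..1} else {0}))
      \<and> (\<Sum>i<n. g i * g i) = 1 \<and> (\<forall>j<k. (\<Sum>i<n. us j $ i * g i) = 0)}"
  have coords_S: "coords x \<in> S \<longleftrightarrow> x \<in> orth_compl n us k \<and> x \<bullet> x = 1"
    and F_coords: "F (coords x) = x \<bullet> (P *\<^sub>v x)" if x: "x \<in> carrier_vec n" for x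
  proof -
    have "x \<bullet> x = 1 \<Longrightarrow> i < n \<Longrightarrow> x $ i \<in> {-1..1}" for i
      using nth_square_le_scalar_prod_self[OF x, of i] abs_le_square_iff[of "x $ i" 1]
      by (auto simp: power2_eq_square abs_le_iff)
    then show "coords x \<in> S \<longleftrightarrow> x \<in> orth_compl n us k \<and> x \<bullet> x = 1"
      using x by (auto simp: S_def orth_compl_def coords_def scalar_prod_def lessThan_atLeast0)
    show "F (coords x) = x \<bullet> (P *\<^sub>v x)"
      using x P by (auto simp: F_def coords_def scalar_prod_def lessThan_atLeast0 intro!: sum.cong)
  qed
  define c where "c = 1 / sqrt (y0 \<bullet> y0)"
  have "0 < y0 \<bullet> y0" using y0 scalar_prod_self_pos_iff[of y0 n] by (auto simp: orth_compl_def)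
  then have "(c \<cdot>\<^sub>v y0) \<bullet> (c \<cdot>\<^sub>v y0) = 1" using y0 by (simp add: c_def power_divide)
  then have "S \<noteq> {}"
    using coords_S[of "c \<cdot>\<^sub>v y0"] orth_compl_smult[OF y0(1)] y0 by (auto simp: orth_compl_def)
  moreover have "continuous_on S F"
    unfolding F_def
    by (intro continuous_intros continuous_on_subset[OF continuous_on_product_coordinates]) auto
  moreover have "compact S"
    unfolding S_def by (rule compact_unit_orth_compl_coordinates)
  ultimately obtain g where g: "g \<in> S" "\<forall>h\<in>S. F h \<le> F g"
    using continuous_attains_sup by blast
  define x where "x = vec n g"
  have xc: "x \<in> carrier_vec n" by (simp add: x_def)
  have "coords x = g"
  proof
    fix i show "coords x i = g i"
      using g(1) by (cases "i < n") (auto simp: S_def coords_def x_def dest: spec[of _ i])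
  qed
  then have x: "x \<in> orth_compl n us k" "x \<bullet> x = 1" using coords_S[OF xc] g(1) by auto
  have "y \<bullet> (P *\<^sub>v y) \<le> x \<bullet> (P *\<^sub>v x)" if "y \<in> orth_compl n us k" "y \<bullet> y = 1" for y
    using g(2) coords_S[of y] F_coords[of y] F_coords[OF xc] \<open>coords x = g\<close> that
    by (auto simp: orth_compl_def)
  with x show ?thesis by blast
qed

lemma quadratic_form_le_of_unit_le:
  fixes P :: "real mat"
  assumes P: "P \<in> carrier_mat n n" and y: "y \<in> orth_compl n us k"
    and max: "\<forall>z\<in>orth_compl n us k. z \<bullet> z = 1 \<longrightarrow> z \<bullet> (P *\<^sub>v z) \<le> \<mu>"
  shows "y \<bullet> (P *\<^sub>v y) \<le> \<mu> * (y \<bullet> y)"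
proof (cases "y = 0\<^sub>v n")
  case True
  then show ?thesis using P by simp
next
  case False
  have yc: "y \<in> carrier_vec n" using y by (simp add: orth_compl_def)
  then have pos: "0 < y \<bullet> y" using False scalar_prod_self_pos_iff by blast
  define c where "c = 1 / sqrt (y \<bullet> y)"
  have "c \<cdot>\<^sub>v y \<in> orth_compl n us k" using orth_compl_smult[OF y] .
  moreover have "(c \<cdot>\<^sub>v y) \<bullet> (c \<cdot>\<^sub>v y) = 1" using pos yc by (simp add: c_def power_divide)
  ultimately have "c\<^sup>2 * (y \<bullet> (P *\<^sub>v y)) \<le> \<mu>"
    using max yc P by (auto simp: mult_mat_vec power2_eq_square)
  moreover have "c\<^sup>2 = 1 / (y \<bullet> y)" using pos by (simp add: c_def power_divide)
  ultimately show ?thesis using pos by (simp add: field_simps)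
qed

text \<open>The residual \<open>r = P x - \<mu> x\<close> satisfies \<open>2 t \<parallel>r\<parallel>\<^sup>2 + O(t\<^sup>2) \<le> 0\<close> along \<open>x + t r\<close>.\<close>

lemma rayleigh_maximizer_is_eigenvector:
  fixes P :: "real mat"
  assumes P: "P \<in> carrier_mat n n" "P\<^sup>T = P"
    and x: "x \<in> orth_compl n us k" "x \<bullet> x = 1" and Px: "P *\<^sub>v x \<in> orth_compl n us k"
    and max: "\<forall>y\<in>orth_compl n us k. y \<bullet> (P *\<^sub>v y) \<le> (x \<bullet> (P *\<^sub>v x)) * (y \<bullet> y)"
  shows "P *\<^sub>v x = (x \<bullet> (P *\<^sub>v x)) \<cdot>\<^sub>v x"
proof -
  define \<mu> where "\<mu> = x \<bullet> (P *\<^sub>v x)"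
  define r where "r = P *\<^sub>v x - \<mu> \<cdot>\<^sub>v x"
  have xc: "x \<in> carrier_vec n" using x by (simp add: orth_compl_def)
  have rc: "r \<in> carrier_vec n" using P xc by (simp add: r_def)
  have "r = P *\<^sub>v x + (- \<mu>) \<cdot>\<^sub>v x" using P xc by (auto simp: r_def intro!: eq_vecI)
  then have r: "r \<in> orth_compl n us k" using orth_compl_add_smult[OF Px x(1)] by simp
  have rr: "r \<bullet> (P *\<^sub>v x) - \<mu> * (r \<bullet> x) = r \<bullet> r"
    using rc P xc by (subst (3) r_def) (simp add: scalar_prod_minus_distrib[of _ n])
  have "t * (2 * (r \<bullet> r)) + t\<^sup>2 * (r \<bullet> (P *\<^sub>v r) - \<mu> * (r \<bullet> r)) \<le> 0" for t
  proof -
    have "(x + t \<cdot>\<^sub>v r) \<bullet> (P *\<^sub>v (x + t \<cdot>\<^sub>v r)) \<le> \<mu> * ((x + t \<cdot>\<^sub>v r) \<bullet> (x + t \<cdot>\<^sub>v r))"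
      using max orth_compl_add_smult[OF x(1) r] by (simp add: \<mu>_def)
    moreover have "(x + t \<cdot>\<^sub>v r) \<bullet> (x + t \<cdot>\<^sub>v r) = 1 + 2 * t * (r \<bullet> x) + t\<^sup>2 * (r \<bullet> r)"
      using quadratic_form_add_smult[of "1\<^sub>m n" n x r t] xc rc x(2) by simp
    ultimately show ?thesis
      using quadratic_form_add_smult[OF P xc rc, of t] rr
      by (simp add: \<mu>_def algebra_simps)
  qed
  then have "r \<bullet> r = 0" using linear_le_quadratic_imp_zero by fastforce
  then have "r = 0\<^sub>v n" using scalar_prod_self_pos_iff[OF rc] by simp
  show ?thesis
  proof (rule eq_vecI)
    fix i assume "i < dim_vec ((x \<bullet> (P *\<^sub>v x)) \<cdot>\<^sub>v x)"
    then have "r $ i = 0" using \<open>r = 0\<^sub>v n\<close> xc by simp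
    then show "(P *\<^sub>v x) $ i = ((x \<bullet> (P *\<^sub>v x)) \<cdot>\<^sub>v x) $ i"
      using \<open>i < _\<close> P xc by (simp add: r_def \<mu>_def)
  qed (use P xc in simp)
qed

lemma exists_unit_eigenvector_in_orth_compl:
  fixes P :: "real mat"
  assumes P: "P \<in> carrier_mat n n" "P\<^sup>T = P" and k: "k < n"
    and us: "\<forall>i<k. us i \<in> carrier_vec n" and ev: "\<forall>i<k. P *\<^sub>v us i = d i \<cdot>\<^sub>v us i"
  shows "\<exists>x\<in>orth_compl n us k. x \<bullet> x = 1 \<and> P *\<^sub>v x = (x \<bullet> (P *\<^sub>v x)) \<cdot>\<^sub>v x"
proof -
  obtain x where x: "x \<in> orth_compl n us k" "x \<bullet> x = 1"
    and max: "\<forall>y\<in>orth_compl n us k. y \<bullet> y = 1 \<longrightarrow> y \<bullet> (P *\<^sub>v y) \<le> x \<bullet> (P *\<^sub>v x)"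
    using orth_compl_nonzero[OF k us] quadratic_form_attains_max_on_unit_orth_compl[OF P(1)] by blast
  have xc: "x \<in> carrier_vec n" using x by (simp add: orth_compl_def)
  have "us i \<bullet> (P *\<^sub>v x) = 0" if i: "i < k" for i
    using symmetric_scalar_prod_mult_mat_vec[OF P _ xc, of "us i"] us[rule_format, OF i] ev x i xc
    by (simp add: orth_compl_def)
  then have "P *\<^sub>v x \<in> orth_compl n us k" using P xc by (simp add: orth_compl_def)
  with rayleigh_maximizer_is_eigenvector[OF P x] quadratic_form_le_of_unit_le[OF P(1) _ max]
  show ?thesis using x by blast
qed

definition orthonormal_eigenvectors ::
    "real mat \<Rightarrow> nat \<Rightarrow> nat \<Rightarrow> (nat \<Rightarrow> real vec) \<Rightarrow> (nat \<Rightarrow> real) \<Rightarrow> bool" where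
  "orthonormal_eigenvectors P n k us d \<longleftrightarrow> (\<forall>i<k. us i \<in> carrier_vec n)
     \<and> (\<forall>i<k. \<forall>j<k. us i \<bullet> us j = (if i = j then 1 else 0)) \<and> (\<forall>i<k. P *\<^sub>v us i = d i \<cdot>\<^sub>v us i)"

lemma orthonormal_eigenvectors_exist:
  fixes P :: "real mat"
  assumes P: "P \<in> carrier_mat n n" "P\<^sup>T = P" and "k \<le> n"
  shows "\<exists>us d. orthonormal_eigenvectors P n k us d"
  using \<open>k \<le> n\<close>
proof (induction k)
  case 0
  then show ?case by (simp add: orthonormal_eigenvectors_def)
next
  case (Suc k)
  then obtain us d where us: "orthonormal_eigenvectors P n k us d" by auto
  then obtain x where x: "x \<in> orth_compl n us k" "x \<bullet> x = 1" "P *\<^sub>v x = (x \<bullet> (P *\<^sub>v x)) \<cdot>\<^sub>v x"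
    using exists_unit_eigenvector_in_orth_compl[OF P, of k us d] Suc.prems
    by (auto simp: orthonormal_eigenvectors_def)
  have "x \<bullet> us i = 0" "us i \<bullet> x = 0" if "i < k" for i
    using x us that comm_scalar_prod[of x n "us i"]
    by (auto simp: orth_compl_def orthonormal_eigenvectors_def)
  then have "orthonormal_eigenvectors P n (Suc k) (us(k := x)) (d(k := x \<bullet> (P *\<^sub>v x)))"
    using us x by (auto simp: orthonormal_eigenvectors_def orth_compl_def less_Suc_eq)
  then show ?case by blast
qed

lemma orthonormal_basis_parseval:
  fixes us :: "nat \<Rightarrow> real vec"
  assumes us: "\<forall>i<n. us i \<in> carrier_vec n"
    and on: "\<forall>i<n. \<forall>j<n. us i \<bullet> us j = (if i = j then 1 else 0)"
    and x: "x \<in> carrier_vec n" and y: "y \<in> carrier_vec n"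
  shows "x \<bullet> y = (\<Sum>i<n. (us i \<bullet> x) * (us i \<bullet> y))"
proof -
  define U where "U = mat n n (\<lambda>(i, j). us i $ j)"
  have U: "U \<in> carrier_mat n n" and UT: "U\<^sup>T \<in> carrier_mat n n" unfolding U_def by auto
  have row: "row U i = us i" if "i < n" for i
    using that us by (auto simp: U_def intro!: eq_vecI)
  have "U * U\<^sup>T = 1\<^sub>m n" using U on row by (intro eq_matI) auto
  then have "U\<^sup>T * U = 1\<^sub>m n" using mat_mult_left_right_inverse[OF U UT] by simp
  then have "x \<bullet> y = (U\<^sup>T *\<^sub>v (U *\<^sub>v x)) \<bullet> y"
    using U x by (simp add: assoc_mult_mat_vec[symmetric, of _ n n _ n])
  also have "\<dots> = (U *\<^sub>v x) \<bullet> (U *\<^sub>v y)"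
    using transpose_vec_mult_scalar[OF U y, of "U *\<^sub>v x"] U x by simp
  also have "\<dots> = (\<Sum>i<n. (us i \<bullet> x) * (us i \<bullet> y))"
    using U row by (auto simp: scalar_prod_def[of "U *\<^sub>v x"] lessThan_atLeast0 intro!: sum.cong)
  finally show ?thesis .
qed

section \<open>Singular values via an eigenbasis of \<open>M\<^sup>T M\<close>\<close>

lemma eigenbasis_coeff_mult:
  fixes P :: "real mat"
  assumes P: "P \<in> carrier_mat n n" "P\<^sup>T = P" and us: "orthonormal_eigenvectors P n n us d"
    and x: "x \<in> carrier_vec n" and i: "i < n"
  shows "us i \<bullet> (P *\<^sub>v x) = d i * (us i \<bullet> x)"
  using symmetric_scalar_prod_mult_mat_vec[OF P _ x, of "us i"] us i x
  by (simp add: orthonormal_eigenvectors_def)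

lemma eigenbasis_eigenvalue_iff:
  fixes P :: "real mat"
  assumes P: "P \<in> carrier_mat n n" "P\<^sup>T = P" and us: "orthonormal_eigenvectors P n n us d"
  shows "eigenvalue P e \<longleftrightarrow> (\<exists>i<n. e = d i)"
proof
  assume "eigenvalue P e"
  then obtain v where v: "v \<in> carrier_vec n" "v \<noteq> 0\<^sub>v n" "P *\<^sub>v v = e \<cdot>\<^sub>v v"
    using P by (auto simp: eigenvalue_def eigenvector_def)
  show "\<exists>i<n. e = d i"
  proof (rule ccontr)
    assume "\<not> (\<exists>i<n. e = d i)"
    then have "us i \<bullet> v = 0" if "i < n" for i
      using eigenbasis_coeff_mult[OF P us v(1) that] v us that
      by (auto simp: orthonormal_eigenvectors_def)
    then have "v \<bullet> v = 0"
      using orthonormal_basis_parseval[of n us v v] us v(1) by (simp add: orthonormal_eigenvectors_def)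
    then show False using scalar_prod_self_pos_iff[OF v(1)] v(2) by simp
  qed
next
  assume "\<exists>i<n. e = d i"
  then obtain i where "i < n" "e = d i" by blast
  moreover have "us i \<noteq> 0\<^sub>v n" if "i < n"
  proof -
    have "us i \<bullet> us i = 1" using us that by (simp add: orthonormal_eigenvectors_def)
    then show ?thesis by auto
  qed
  ultimately show "eigenvalue P e"
    using us P by (auto simp: eigenvalue_def eigenvector_def orthonormal_eigenvectors_def)
qed

locale gram_eigenbasis =
  fixes M :: "real mat" and r c :: nat and us :: "nat \<Rightarrow> real vec" and d :: "nat \<Rightarrow> real"
  assumes M: "M \<in> carrier_mat r c"
    and eigenbasis: "orthonormal_eigenvectors (M\<^sup>T * M) c c us d"
begin

lemma gram: "M\<^sup>T * M \<in> carrier_mat c c" "(M\<^sup>T * M)\<^sup>T = M\<^sup>T * M"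
  using M by (auto simp: transpose_mult[of _ c r _ c])

lemma orthonormal: "\<forall>i<c. us i \<in> carrier_vec c" "\<forall>i<c. \<forall>j<c. us i \<bullet> us j = (if i = j then 1 else 0)"
  using eigenbasis by (simp_all add: orthonormal_eigenvectors_def)

lemma norm_eq_sum: "x \<in> carrier_vec c \<Longrightarrow> x \<bullet> x = (\<Sum>i<c. (us i \<bullet> x)\<^sup>2)"
  using orthonormal_basis_parseval[OF orthonormal] by (simp add: power2_eq_square)

lemma norm_mult_eq_sum:
  assumes x: "x \<in> carrier_vec c"
  shows "(M *\<^sub>v x) \<bullet> (M *\<^sub>v x) = (\<Sum>i<c. d i * (us i \<bullet> x)\<^sup>2)"
proof -
  have "(M *\<^sub>v x) \<bullet> (M *\<^sub>v x) = x \<bullet> ((M\<^sup>T * M) *\<^sub>v x)" using scalar_prod_mult_mat_vec_self[OF M x] .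
  also have "\<dots> = (\<Sum>i<c. (us i \<bullet> x) * (us i \<bullet> ((M\<^sup>T * M) *\<^sub>v x)))"
    using orthonormal_basis_parseval[OF orthonormal x] gram(1) x by simp
  also have "\<dots> = (\<Sum>i<c. d i * (us i \<bullet> x)\<^sup>2)"
    by (intro sum.cong) (auto simp: eigenbasis_coeff_mult[OF gram eigenbasis x] power2_eq_square)
  finally show ?thesis .
qed

lemma norm_gram_mult_eq_sum:
  assumes x: "x \<in> carrier_vec c"
  shows "((M\<^sup>T * M) *\<^sub>v x) \<bullet> ((M\<^sup>T * M) *\<^sub>v x) = (\<Sum>i<c. (d i)\<^sup>2 * (us i \<bullet> x)\<^sup>2)"
proof -
  have "((M\<^sup>T * M) *\<^sub>v x) \<bullet> ((M\<^sup>T * M) *\<^sub>v x)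
      = (\<Sum>i<c. (us i \<bullet> ((M\<^sup>T * M) *\<^sub>v x)) * (us i \<bullet> ((M\<^sup>T * M) *\<^sub>v x)))"
    using orthonormal_basis_parseval[OF orthonormal] gram(1) x by simp
  also have "\<dots> = (\<Sum>i<c. (d i)\<^sup>2 * (us i \<bullet> x)\<^sup>2)"
    by (intro sum.cong) (auto simp: eigenbasis_coeff_mult[OF gram eigenbasis x] power2_eq_square)
  finally show ?thesis .
qed

lemma eigenvalue_nonneg:
  assumes i: "i < c"
  shows "0 \<le> d i"
proof -
  have u: "us i \<in> carrier_vec c" using orthonormal(1) i by simp
  have "d i = us i \<bullet> ((M\<^sup>T * M) *\<^sub>v us i)"
    using eigenbasis_coeff_mult[OF gram eigenbasis u i] orthonormal(2) i by simp
  also have "\<dots> = (M *\<^sub>v us i) \<bullet> (M *\<^sub>v us i)" using scalar_prod_mult_mat_vec_self[OF M u] by simp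
  finally show ?thesis using scalar_prod_self_nonneg by simp
qed

lemma pos_singular_values_eq: "pos_singular_values M = {s. 0 < s \<and> (\<exists>i<c. s\<^sup>2 = d i)}"
  using eigenbasis_eigenvalue_iff[OF gram eigenbasis] by (auto simp: pos_singular_values_def)

lemma sqrt_eigenvalue_mem: "i < c \<Longrightarrow> 0 < d i \<Longrightarrow> sqrt (d i) \<in> pos_singular_values M"
  by (auto simp: pos_singular_values_eq)

lemma finite_pos_singular_values: "finite (pos_singular_values M)"
proof (rule finite_subset)
  show "pos_singular_values M \<subseteq> (\<lambda>i. sqrt (d i)) ` {..<c}"
  proof
    fix s assume "s \<in> pos_singular_values M"
    then obtain i where "0 < s" "i < c" "s\<^sup>2 = d i" by (auto simp: pos_singular_values_eq)
    then show "s \<in> (\<lambda>i. sqrt (d i)) ` {..<c}" using real_sqrt_unique[of s "d i"] by auto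
  qed
qed simp

lemma eigenvalue_le_Max:
  assumes "i < c"
  shows "d i \<le> (Max (pos_singular_values M))\<^sup>2"
proof (cases "d i = 0")
  case False
  then have "0 < d i" using eigenvalue_nonneg[OF assms] by simp
  then have "sqrt (d i) \<le> Max (pos_singular_values M)"
    using Max_ge[OF finite_pos_singular_values sqrt_eigenvalue_mem[OF assms]] by simp
  then show ?thesis by (rule sqrt_le_D)
qed simp

lemma Min_le_eigenvalue:
  assumes "i < c" "0 < d i"
  shows "(Min (pos_singular_values M))\<^sup>2 \<le> d i"
proof -
  have mem: "sqrt (d i) \<in> pos_singular_values M" using sqrt_eigenvalue_mem[OF assms] .
  then have "Min (pos_singular_values M) \<in> pos_singular_values M"
    using Min_in[OF finite_pos_singular_values] by blast
  then have "0 < Min (pos_singular_values M)" by (simp add: pos_singular_values_def)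
  moreover have "Min (pos_singular_values M) \<le> sqrt (d i)"
    using Min_le[OF finite_pos_singular_values mem] .
  ultimately have "(Min (pos_singular_values M))\<^sup>2 \<le> (sqrt (d i))\<^sup>2" by (intro power_mono) auto
  then show ?thesis using assms by simp
qed

end

lemma gram_eigenbasis_exists:
  assumes M: "M \<in> carrier_mat r c"
  obtains us d where "gram_eigenbasis M r c us d"
proof -
  have "M\<^sup>T * M \<in> carrier_mat c c" "(M\<^sup>T * M)\<^sup>T = M\<^sup>T * M"
    using M by (auto simp: transpose_mult[of _ c r _ c])
  then obtain us d where "orthonormal_eigenvectors (M\<^sup>T * M) c c us d"
    using orthonormal_eigenvectors_exist by blast
  with M that show ?thesis by (simp add: gram_eigenbasis_def)
qed

lemma pos_singular_values_finite:
  assumes "M \<in> carrier_mat r c"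
  shows "finite (pos_singular_values M)"
proof -
  obtain us d where "gram_eigenbasis M r c us d" using gram_eigenbasis_exists[OF assms] .
  then show ?thesis by (rule gram_eigenbasis.finite_pos_singular_values)
qed

lemma norm_mult_le_Max_singular_value:
  assumes M: "M \<in> carrier_mat r c" and x: "x \<in> carrier_vec c"
  shows "(M *\<^sub>v x) \<bullet> (M *\<^sub>v x) \<le> (Max (pos_singular_values M))\<^sup>2 * (x \<bullet> x)"
proof -
  obtain us d where "gram_eigenbasis M r c us d" using gram_eigenbasis_exists[OF M] .
  then interpret gram_eigenbasis M r c us d .
  have "(M *\<^sub>v x) \<bullet> (M *\<^sub>v x) = (\<Sum>i<c. d i * (us i \<bullet> x)\<^sup>2)" using norm_mult_eq_sum[OF x] .
  also have "\<dots> \<le> (\<Sum>i<c. (Max (pos_singular_values M))\<^sup>2 * (us i \<bullet> x)\<^sup>2)"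
    by (intro sum_mono mult_right_mono eigenvalue_le_Max) auto
  also have "\<dots> = (Max (pos_singular_values M))\<^sup>2 * (x \<bullet> x)"
    using norm_eq_sum[OF x] by (simp add: sum_distrib_left)
  finally show ?thesis .
qed

lemma Min_singular_value_norm_le:
  assumes M: "M \<in> carrier_mat r c" and x: "x \<in> carrier_vec c"
  shows "(Min (pos_singular_values M))\<^sup>2 * ((M *\<^sub>v x) \<bullet> (M *\<^sub>v x))
    \<le> ((M\<^sup>T * M) *\<^sub>v x) \<bullet> ((M\<^sup>T * M) *\<^sub>v x)"
proof -
  obtain us d where "gram_eigenbasis M r c us d" using gram_eigenbasis_exists[OF M] .
  then interpret gram_eigenbasis M r c us d .
  have "(Min (pos_singular_values M))\<^sup>2 * d i \<le> (d i)\<^sup>2" if "i < c" for i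
    using Min_le_eigenvalue[OF that] eigenvalue_nonneg[OF that]
    by (cases "d i = 0") (auto simp: power2_eq_square)
  then have "(\<Sum>i<c. (Min (pos_singular_values M))\<^sup>2 * (d i * (us i \<bullet> x)\<^sup>2))
      \<le> (\<Sum>i<c. (d i)\<^sup>2 * (us i \<bullet> x)\<^sup>2)"
    by (intro sum_mono) (simp add: mult.assoc[symmetric] mult_right_mono)
  then show ?thesis
    using norm_mult_eq_sum[OF x] norm_gram_mult_eq_sum[OF x] by (simp add: sum_distrib_left)
qed

lemma pos_singular_values_nonempty:
  assumes M: "M \<in> carrier_mat r c" and "a < r" "b < c" "M $$ (a, b) \<noteq> 0"
  shows "pos_singular_values M \<noteq> {}"
proof -
  obtain us d where "gram_eigenbasis M r c us d" using gram_eigenbasis_exists[OF M] .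
  then interpret gram_eigenbasis M r c us d .
  have "0 < M $$ (a, b) * M $$ (a, b)" using assms(4) by (auto simp: zero_less_mult_iff linorder_neq_iff)
  also have "\<dots> \<le> (M *\<^sub>v unit_vec c b) \<bullet> (M *\<^sub>v unit_vec c b)"
    using nth_square_le_scalar_prod_self[of "M *\<^sub>v unit_vec c b" r a] M assms by simp
  also have "\<dots> = (\<Sum>i<c. d i * (us i \<bullet> unit_vec c b)\<^sup>2)"
    using norm_mult_eq_sum[of "unit_vec c b"] by simp
  finally obtain i where "i < c" "d i \<noteq> 0"
    using sum.neutral[of "{..<c}" "\<lambda>i. d i * (us i \<bullet> unit_vec c b)\<^sup>2"] by auto
  then show ?thesis using sqrt_eigenvalue_mem eigenvalue_nonneg by force
qed

lemma singular_value_eigenvector: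
  assumes M: "M \<in> carrier_mat r c" and s: "s \<in> pos_singular_values M"
  obtains v where "v \<in> carrier_vec c" "v \<noteq> 0\<^sub>v c" "(M\<^sup>T * M) *\<^sub>v v = s\<^sup>2 \<cdot>\<^sub>v v"
  using s M by (auto simp: pos_singular_values_def eigenvalue_def eigenvector_def)

section \<open>Singular values of a product\<close>

lemma singular_value_mult_le:
  fixes A B :: "real mat"
  assumes A: "A \<in> carrier_mat m n" and B: "B \<in> carrier_mat n p" and K: "0 \<le> K"
    and B_bound: "\<forall>v\<in>carrier_vec p. (B *\<^sub>v v) \<bullet> (B *\<^sub>v v) \<le> K\<^sup>2 * (v \<bullet> v)"
    and ne: "pos_singular_values A \<noteq> {}" and s: "s \<in> pos_singular_values (A * B)"
  shows "s \<le> K * Max (pos_singular_values A)"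
proof -
  let ?\<sigma> = "Max (pos_singular_values A)"
  have AB: "A * B \<in> carrier_mat m p" using A B by simp
  obtain v where v: "v \<in> carrier_vec p" "v \<noteq> 0\<^sub>v p" "((A * B)\<^sup>T * (A * B)) *\<^sub>v v = s\<^sup>2 \<cdot>\<^sub>v v"
    using singular_value_eigenvector[OF AB s] .
  have "s\<^sup>2 * (v \<bullet> v) = v \<bullet> (((A * B)\<^sup>T * (A * B)) *\<^sub>v v)" by (simp add: v(3))
  also have "\<dots> = (A *\<^sub>v (B *\<^sub>v v)) \<bullet> (A *\<^sub>v (B *\<^sub>v v))"
    using scalar_prod_mult_mat_vec_self[OF AB v(1)] A B v(1) by simp
  also have "\<dots> \<le> ?\<sigma>\<^sup>2 * ((B *\<^sub>v v) \<bullet> (B *\<^sub>v v))"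
    using norm_mult_le_Max_singular_value[OF A] B v(1) by simp
  also have "\<dots> \<le> ?\<sigma>\<^sup>2 * (K\<^sup>2 * (v \<bullet> v))"
    by (rule mult_left_mono[OF B_bound[rule_format, OF v(1)]]) simp
  also have "\<dots> = (K * ?\<sigma>)\<^sup>2 * (v \<bullet> v)" by (simp add: power_mult_distrib)
  finally have "s\<^sup>2 \<le> (K * ?\<sigma>)\<^sup>2" using v(1,2) scalar_prod_self_pos_iff[of v p] by simp
  moreover have "0 < ?\<sigma>"
    using Max_in[OF pos_singular_values_finite[OF A] ne] by (simp add: pos_singular_values_def)
  ultimately show ?thesis using K by (auto intro: power2_le_imp_le)
qed

lemma Min_singular_value_le_mult:
  fixes A B :: "real mat"
  assumes A: "A \<in> carrier_mat m n" and B: "B \<in> carrier_mat n p"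
    and BT_expanding: "\<forall>u\<in>carrier_vec n. u \<bullet> u \<le> (B\<^sup>T *\<^sub>v u) \<bullet> (B\<^sup>T *\<^sub>v u)"
    and s: "s \<in> pos_singular_values (A * B)"
  shows "Min (pos_singular_values A) \<le> s"
proof -
  have AB: "A * B \<in> carrier_mat m p" using A B by simp
  obtain v where v: "v \<in> carrier_vec p" "v \<noteq> 0\<^sub>v p" "((A * B)\<^sup>T * (A * B)) *\<^sub>v v = s\<^sup>2 \<cdot>\<^sub>v v"
    using singular_value_eigenvector[OF AB s] .
  define w where "w = B *\<^sub>v v"
  define u where "u = (A\<^sup>T * A) *\<^sub>v w"
  have w: "w \<in> carrier_vec n" and u: "u \<in> carrier_vec n" using A B v by (auto simp: w_def u_def)
  have BTu: "B\<^sup>T *\<^sub>v u = s\<^sup>2 \<cdot>\<^sub>v v"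
  proof -
    have "((A * B)\<^sup>T * (A * B)) *\<^sub>v v = (A * B)\<^sup>T *\<^sub>v (A *\<^sub>v w)"
      using AB A B v(1) by (simp add: w_def assoc_mult_mat_vec[of _ p m _ p])
    also have "\<dots> = B\<^sup>T *\<^sub>v u"
      using A B w by (simp add: u_def transpose_mult[of _ m n _ p] assoc_mult_mat_vec[of _ p n _ m])
    finally show ?thesis using v(3) by simp
  qed
  have BTu_norm: "(B\<^sup>T *\<^sub>v u) \<bullet> (B\<^sup>T *\<^sub>v u) = s\<^sup>2 * ((A *\<^sub>v w) \<bullet> (A *\<^sub>v w))"
  proof -
    have "(B\<^sup>T *\<^sub>v u) \<bullet> (B\<^sup>T *\<^sub>v u) = s\<^sup>2 * ((B\<^sup>T *\<^sub>v u) \<bullet> v)" using BTu B u v by simp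
    also have "(B\<^sup>T *\<^sub>v u) \<bullet> v = u \<bullet> w"
      unfolding w_def by (rule transpose_vec_mult_scalar[OF B v(1) u])
    also have "u \<bullet> w = (A *\<^sub>v w) \<bullet> (A *\<^sub>v w)"
      using scalar_prod_mult_mat_vec_self[OF A w] comm_scalar_prod[of w n u] w u by (simp add: u_def)
    finally show ?thesis .
  qed
  moreover have "0 < (B\<^sup>T *\<^sub>v u) \<bullet> (B\<^sup>T *\<^sub>v u)"
    using BTu v scalar_prod_self_pos_iff[of v p] s by (auto simp: pos_singular_values_def)
  ultimately have q: "0 < (A *\<^sub>v w) \<bullet> (A *\<^sub>v w)" by (simp add: zero_less_mult_iff)
  have "(Min (pos_singular_values A))\<^sup>2 * ((A *\<^sub>v w) \<bullet> (A *\<^sub>v w)) \<le> u \<bullet> u"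
    using Min_singular_value_norm_le[OF A w] by (simp add: u_def)
  also have "\<dots> \<le> s\<^sup>2 * ((A *\<^sub>v w) \<bullet> (A *\<^sub>v w))"
    using BT_expanding[rule_format, OF u] BTu_norm by simp
  finally have "(Min (pos_singular_values A))\<^sup>2 \<le> s\<^sup>2" using q by simp
  then show ?thesis using s by (auto simp: pos_singular_values_def intro: power2_le_imp_le)
qed

lemma cond_num_mult_le:
  fixes A B :: "real mat"
  assumes A: "A \<in> carrier_mat m n" and B: "B \<in> carrier_mat n p" and K: "0 \<le> K"
    and B_bound: "\<forall>v\<in>carrier_vec p. (B *\<^sub>v v) \<bullet> (B *\<^sub>v v) \<le> K\<^sup>2 * (v \<bullet> v)"
    and BT_expanding: "\<forall>u\<in>carrier_vec n. u \<bullet> u \<le> (B\<^sup>T *\<^sub>v u) \<bullet> (B\<^sup>T *\<^sub>v u)"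
    and ne: "pos_singular_values A \<noteq> {}" "pos_singular_values (A * B) \<noteq> {}"
  shows "cond_num (A * B) \<le> K * cond_num A"
proof -
  let ?SA = "pos_singular_values A" and ?SZ = "pos_singular_values (A * B)"
  have fin: "finite ?SA" "finite ?SZ" using A B by (auto intro: pos_singular_values_finite)
  have pos: "0 < Min ?SA" "0 < Max ?SA"
    using Min_in[OF fin(1) ne(1)] Max_in[OF fin(1) ne(1)] by (auto simp: pos_singular_values_def)
  have "Max ?SZ \<le> K * Max ?SA"
    using singular_value_mult_le[OF A B K B_bound ne(1)] Max_in[OF fin(2) ne(2)] by blast
  moreover have "Min ?SA \<le> Min ?SZ"
    using Min_singular_value_le_mult[OF A B BT_expanding] Min_in[OF fin(2) ne(2)] by blast
  ultimately have "Max ?SZ / Min ?SZ \<le> K * Max ?SA / Min ?SA"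
    using pos K by (intro frac_le) (auto intro: mult_nonneg_nonneg)
  then show ?thesis by (simp add: cond_num_def)
qed

section \<open>The factorization \<open>A\<^sup>Z = A (I | -\<one>)\<close>\<close>

definition AZ_factor :: "nat \<Rightarrow> real mat" where
  "AZ_factor n = mat n (Suc n) (\<lambda>(k, j). if j < n then (if k = j then 1 else 0) else -1)"

lemma AZ_factor_carrier: "AZ_factor n \<in> carrier_mat n (Suc n)"
  by (simp add: AZ_factor_def)

lemma AZ_factor_mult_vec_nth:
  assumes v: "v \<in> carrier_vec (Suc n)" and k: "k < n"
  shows "(AZ_factor n *\<^sub>v v) $ k = v $ k - v $ n"
proof -
  have "(AZ_factor n *\<^sub>v v) $ k = (\<Sum>j<Suc n. AZ_factor n $$ (k, j) * v $ j)"
    using v k AZ_factor_carrier[of n] by (auto simp: scalar_prod_def lessThan_atLeast0 intro!: sum.cong)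
  also have "\<dots> = (\<Sum>j<n. AZ_factor n $$ (k, j) * v $ j) + AZ_factor n $$ (k, n) * v $ n" by simp
  also have "(\<Sum>j<n. AZ_factor n $$ (k, j) * v $ j) = (\<Sum>j<n. if k = j then v $ j else 0)"
    by (intro sum.cong refl) (use k in \<open>auto simp: AZ_factor_def\<close>)
  finally show ?thesis using k by (simp add: AZ_factor_def)
qed

lemma transpose_AZ_factor_mult_vec_nth:
  assumes u: "u \<in> carrier_vec n" and j: "j < n"
  shows "((AZ_factor n)\<^sup>T *\<^sub>v u) $ j = u $ j"
proof -
  have "((AZ_factor n)\<^sup>T *\<^sub>v u) $ j = (\<Sum>k<n. AZ_factor n $$ (k, j) * u $ k)"
    using u j AZ_factor_carrier[of n] by (auto simp: scalar_prod_def lessThan_atLeast0 intro!: sum.cong)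
  also have "\<dots> = (\<Sum>k<n. if k = j then u $ k else 0)"
    by (intro sum.cong refl) (use j in \<open>auto simp: AZ_factor_def\<close>)
  finally show ?thesis using j by simp
qed

lemma norm_AZ_factor_mult_le:
  assumes v: "v \<in> carrier_vec (Suc n)"
  shows "(AZ_factor n *\<^sub>v v) \<bullet> (AZ_factor n *\<^sub>v v) \<le> 2 * (real n + 1) * (v \<bullet> v)"
proof -
  have Bv: "AZ_factor n *\<^sub>v v \<in> carrier_vec n" using AZ_factor_carrier[of n] v by simp
  have "(AZ_factor n *\<^sub>v v) \<bullet> (AZ_factor n *\<^sub>v v) = (\<Sum>k<n. (v $ k - v $ n) * (v $ k - v $ n))"
    using scalar_prod_self_eq_sum[OF Bv] AZ_factor_mult_vec_nth[OF v] by simp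
  also have "\<dots> \<le> (\<Sum>k<n. 2 * (v $ k * v $ k) + 2 * (v $ n * v $ n))"
    by (intro sum_mono) (use sum_squares_ge_zero[of "v $ _ + v $ n" 0] in \<open>simp add: algebra_simps\<close>)
  also have "\<dots> = 2 * (\<Sum>k<n. v $ k * v $ k) + 2 * n * (v $ n * v $ n)"
    by (simp add: sum.distrib sum_distrib_left)
  also have "\<dots> \<le> 2 * (v \<bullet> v) + 2 * n * (v \<bullet> v)"
    using scalar_prod_self_eq_sum[OF v] nth_square_le_scalar_prod_self[OF v, of n]
    by (intro add_mono mult_left_mono) auto
  finally show ?thesis by (simp add: algebra_simps)
qed

lemma norm_le_transpose_AZ_factor_mult:
  assumes u: "u \<in> carrier_vec n"
  shows "u \<bullet> u \<le> ((AZ_factor n)\<^sup>T *\<^sub>v u) \<bullet> ((AZ_factor n)\<^sup>T *\<^sub>v u)"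
proof -
  have BTu: "(AZ_factor n)\<^sup>T *\<^sub>v u \<in> carrier_vec (Suc n)" using AZ_factor_carrier[of n] u by simp
  have "((AZ_factor n)\<^sup>T *\<^sub>v u) \<bullet> ((AZ_factor n)\<^sup>T *\<^sub>v u)
      = (\<Sum>j<n. u $ j * u $ j) + ((AZ_factor n)\<^sup>T *\<^sub>v u) $ n * ((AZ_factor n)\<^sup>T *\<^sub>v u) $ n"
    using scalar_prod_self_eq_sum[OF BTu] transpose_AZ_factor_mult_vec_nth[OF u] by simp
  also have "(\<Sum>j<n. u $ j * u $ j) = u \<bullet> u" using scalar_prod_self_eq_sum[OF u] by simp
  finally show ?thesis by simp
qed

lemma of_int_AZ_eq_mult:
  assumes A: "A \<in> carrier_mat m n"
  shows "map_mat real_of_int (AZ A) = map_mat real_of_int A * AZ_factor n"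
proof (rule eq_matI)
  fix i j assume "i < dim_row (map_mat real_of_int A * AZ_factor n)"
    and "j < dim_col (map_mat real_of_int A * AZ_factor n)"
  then have i: "i < m" and j: "j < Suc n" using A AZ_factor_carrier[of n] by auto
  have "(map_mat real_of_int A * AZ_factor n) $$ (i, j)
      = (\<Sum>k<n. real_of_int (A $$ (i, k)) * AZ_factor n $$ (k, j))"
    using A AZ_factor_carrier[of n] i j by (auto simp: scalar_prod_def lessThan_atLeast0 intro!: sum.cong)
  also have "\<dots> = real_of_int (AZ A $$ (i, j))"
  proof (cases "j < n")
    case True
    then have "(\<Sum>k<n. real_of_int (A $$ (i, k)) * AZ_factor n $$ (k, j))
        = (\<Sum>k<n. if k = j then real_of_int (A $$ (i, k)) else 0)"
      by (intro sum.cong refl) (auto simp: AZ_factor_def)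
    then show ?thesis using True i A by (simp add: AZ_def)
  next
    case False
    then have "j = n" using j by simp
    then have "(\<Sum>k<n. real_of_int (A $$ (i, k)) * AZ_factor n $$ (k, j))
        = (\<Sum>k<n. - real_of_int (A $$ (i, k)))"
      by (intro sum.cong refl) (auto simp: AZ_factor_def)
    then show ?thesis using \<open>j = n\<close> i A by (simp add: AZ_def sum_negf)
  qed
  finally show "map_mat real_of_int (AZ A) $$ (i, j) = (map_mat real_of_int A * AZ_factor n) $$ (i, j)"
    using A i j by (simp add: AZ_def)
qed (use A AZ_factor_carrier[of n] in \<open>auto simp: AZ_def\<close>)

lemma cond_num_nonneg:
  assumes "M \<in> carrier_mat r c" and "pos_singular_values M \<noteq> {}"
  shows "0 \<le> cond_num M"
proof -
  have "Max (pos_singular_values M) \<in> pos_singular_values M" "Min (pos_singular_values M) \<in> pos_singular_values M"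
    using Max_in Min_in pos_singular_values_finite[OF assms(1)] assms(2) by auto
  then show ?thesis by (auto simp: cond_num_def pos_singular_values_def)
qed

lemma sqrt_le_two_powr_three_halves:
  assumes "0 < n"
  shows "sqrt (2 * (real n + 1)) \<le> 2 * real n powr (3/2)"
proof -
  have n: "1 \<le> real n" using assms by simp
  then have "sqrt (2 * (real n + 1)) \<le> sqrt (4 * real n)" by simp
  also have "\<dots> = 2 * real n powr (1/2)" by (simp add: real_sqrt_mult powr_half_sqrt)
  also have "\<dots> \<le> 2 * real n powr (3/2)" using n by (simp add: powr_mono)
  finally show ?thesis .
qed

theorem lemma7p8:
  "\<exists>C::real. \<forall>(A::int mat) m n.
     A \<in> carrier_mat m n \<longrightarrow> n > 0 \<longrightarrow>
     (\<forall>i<m. \<exists>j<n. A $$ (i,j) \<noteq> 0) \<longrightarrow>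
     (\<forall>j<n. \<exists>i<m. A $$ (i,j) \<noteq> 0) \<longrightarrow>
     cond_num (map_mat real_of_int (AZ A))
       \<le> C * real n powr (3/2) * cond_num (map_mat real_of_int A)"
proof (intro exI[of _ 2] allI impI)
  fix A :: "int mat" and m n
  assume A: "A \<in> carrier_mat m n" and n: "n > 0" and cols: "\<forall>j<n. \<exists>i<m. A $$ (i,j) \<noteq> 0"
  let ?A = "map_mat real_of_int A" and ?K = "sqrt (2 * (real n + 1))"
  obtain a where a: "a < m" "A $$ (a, 0) \<noteq> 0" using cols n by auto
  have A': "?A \<in> carrier_mat m n" using A by simp
  have AZ: "map_mat real_of_int (AZ A) \<in> carrier_mat m (Suc n)" using A by (simp add: AZ_def)
  have ne: "pos_singular_values ?A \<noteq> {}"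
    using pos_singular_values_nonempty[OF A' a(1) n] a A n by simp
  have "map_mat real_of_int (AZ A) $$ (a, 0) \<noteq> 0" using a A n by (simp add: AZ_def)
  then have ne_AZ: "pos_singular_values (?A * AZ_factor n) \<noteq> {}"
    using pos_singular_values_nonempty[OF AZ a(1), of 0] unfolding of_int_AZ_eq_mult[OF A] by simp
  have "cond_num (map_mat real_of_int (AZ A)) \<le> ?K * cond_num ?A"
    unfolding of_int_AZ_eq_mult[OF A]
  proof (rule cond_num_mult_le[OF A' AZ_factor_carrier _ _ _ ne ne_AZ])
    show "\<forall>v\<in>carrier_vec (Suc n). (AZ_factor n *\<^sub>v v) \<bullet> (AZ_factor n *\<^sub>v v) \<le> ?K\<^sup>2 * (v \<bullet> v)"
      using norm_AZ_factor_mult_le[of _ n] by simp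
    show "\<forall>u\<in>carrier_vec n. u \<bullet> u \<le> ((AZ_factor n)\<^sup>T *\<^sub>v u) \<bullet> ((AZ_factor n)\<^sup>T *\<^sub>v u)"
      using norm_le_transpose_AZ_factor_mult by blast
  qed simp
  also have "\<dots> \<le> 2 * real n powr (3/2) * cond_num ?A"
    by (rule mult_right_mono[OF sqrt_le_two_powr_three_halves[OF n] cond_num_nonneg[OF A' ne]])
  finally show "cond_num (map_mat real_of_int (AZ A)) \<le> 2 * real n powr (3/2) * cond_num ?A" .
qed

end
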